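(* Let $\Omega$ be a bounded open subset of $\mathbb{R}^N$, fix $a>0$ and set $p=2(a+1)$. Define $g:\mathbb{R}\times\mathbb{C}\to\mathbb{C}$ by $g(\alpha,v)=|v|^\alpha v$ if $\alpha>0$ and $g(\alpha,v)=v$ if $\alpha\le0$, and let $G(\alpha,v)(\cdot)=g(\alpha,v(\cdot))$ for $(\alpha,v)\in(-\infty,a]\times L^p(\Omega)$, so that $G$ is Fréchet differentiable in $v$ with derivative $\partial_vG(\alpha,v)\in\mathcal{L}(L^p(\Omega),L^2(\Omega))$ given by $\partial_vG(\alpha,v)u=|v|^\alpha u+\alpha|v|^{\alpha-2}v\,\mathrm{Re}(\bar v u)$ (interpreted as $0$ where $v=0$) if $\alpha>0$, and $\partial_vG(\alpha,v)u=u$ if $\alpha\le0$. Let $v\in L^p(\Omega)$ satisfy $v(x)\ne0$ for a.e. $x\in\Omega$. Then the map $(\alpha,w)\mapsto\partial_vG(\alpha,w)$, from $(-\infty,a]\times L^p(\Omega)$ to $\mathcal{L}(L^p(\Omega),L^2(\Omega))$ (operator norm topology), is continuous at $(0,v)$.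
   Context: Lebesgue spaces $L^r(\Omega)$ consist of complex-valued functions and are regarded as real Banach spaces; $\mathcal{L}(L^p(\Omega),L^2(\Omega))$ denotes bounded real-linear operators with the operator norm. *)

theory Defs
  imports "HOL-Analysis.Analysis"
begin

text \<open>Functions in L^r(Omega) are represented by complex-valued functions on the ambient
  Euclidean space, measured with Lebesgue measure restricted to Omega.\<close>

definition memLp :: "'n::euclidean_space set \<Rightarrow> real \<Rightarrow> ('n \<Rightarrow> complex) \<Rightarrow> bool" where
  "memLp \<Omega> r f \<longleftrightarrow> f \<in> borel_measurable (lebesgue_on \<Omega>) \<and>
      integrable (lebesgue_on \<Omega>) (\<lambda>x. norm (f x) powr r)"

definition Lpnorm :: "'n::euclidean_space set \<Rightarrow> real \<Rightarrow> ('n \<Rightarrow> complex) \<Rightarrow> real" where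
  "Lpnorm \<Omega> r f = (\<integral>x. norm (f x) powr r \<partial>(lebesgue_on \<Omega>)) powr (1 / r)"

definition gfun :: "real \<Rightarrow> complex \<Rightarrow> complex" where
  "gfun \<alpha> z = (if \<alpha> > 0 then complex_of_real (norm z powr \<alpha>) * z else z)"

definition dG :: "real \<Rightarrow> ('n \<Rightarrow> complex) \<Rightarrow> ('n \<Rightarrow> complex) \<Rightarrow> ('n \<Rightarrow> complex)" where
  "dG \<alpha> v u = (\<lambda>x. if \<alpha> > 0 then
       (if v x = 0 then 0 else
          complex_of_real (norm (v x) powr \<alpha>) * u x
          + complex_of_real (\<alpha> * norm (v x) powr (\<alpha> - 2) * Re (cnj (v x) * u x)) * v x)
     else u x)"

text \<open>Operator norm in L(L^p(Omega), L^2(Omega)) of a (real-linear) operator T (valued in ereal,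
  so that unbounded operators get norm infinity).\<close>
definition opnorm_p2 :: "'n::euclidean_space set \<Rightarrow> real \<Rightarrow> (('n \<Rightarrow> complex) \<Rightarrow> ('n \<Rightarrow> complex)) \<Rightarrow> ereal" where
  "opnorm_p2 \<Omega> p T = (SUP u\<in>{u. memLp \<Omega> p u \<and> Lpnorm \<Omega> p u \<le> 1}. ereal (Lpnorm \<Omega> 2 (T u)))"

end

theory Submission
  imports Defs
begin

text \<open>
  For \<open>\<alpha> \<le> 0\<close> the difference of the two derivatives vanishes. For \<open>\<alpha> > 0\<close> it is bounded
  pointwise by \<open>\<phi>\<^sub>\<alpha>(|w|) |u|\<close> with \<open>\<phi>\<^sub>\<alpha>(s) = |s^\<alpha> - 1| + \<alpha> s^\<alpha>\<close>, and Young's inequality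
  with the conjugate exponents \<open>(a+1)/a\<close> and \<open>a+1\<close> bounds its \<open>L\<^sup>2\<close>-norm uniformly in
  \<open>\<parallel>u\<parallel>\<^sub>p \<le> 1\<close> as soon as \<open>\<integral> \<phi>\<^sub>\<alpha>(|w|)^q\<close> is small, \<open>q = 2(a+1)/a\<close>. On a band
  \<open>\<eta> \<le> |w| \<le> K\<close> the function \<open>\<phi>\<^sub>\<alpha>\<close> is uniformly small for small \<open>\<alpha>\<close>; off the band
  \<open>\<phi>\<^sub>\<alpha>(|w|)^q\<close> is dominated by \<open>1 + |w|^p\<close>. Where \<open>|w|\<close> leaves the band, either \<open>|v|\<close>
  leaves a narrower band, which by dominated convergence costs little because \<open>v \<noteq> 0\<close> a.e.,
  or \<open>|w - v|\<close> is bounded below, which costs a multiple of \<open>\<parallel>w - v\<parallel>\<^sub>p^p\<close>.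
\<close>

lemma powr_add_le_two_powr:
  fixes x y p :: real
  assumes "0 \<le> x" "0 \<le> y" "0 < p"
  shows "(x + y) powr p \<le> 2 powr p * (x powr p + y powr p)"
proof -
  have "(x + y) powr p \<le> (2 * max x y) powr p"
    using assms by (intro powr_mono2) auto
  also have "\<dots> = 2 powr p * max x y powr p"
    using assms by (simp add: powr_mult)
  also have "max x y powr p \<le> x powr p + y powr p"
    by (simp add: max_def)
  finally show ?thesis by simp
qed

lemma Youngs_inequality_scaled:
  fixes p q s A B :: real
  assumes "p > 1" "q > 1" "1/p + 1/q = 1" "0 \<le> A" "0 \<le> B" "s > 0"
  shows "A * B \<le> s powr (1 - p) * A powr p + s * B powr q"
proof -
  define r where "r = s powr (1/q)"
  have "p / q = p - 1"
    using assms by (simp add: field_simps)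
  then have r: "0 < r" "r powr q = s" "r powr p = s powr (p - 1)"
    using assms by (simp_all add: r_def powr_powr)
  have "A * B = (A / r) * (r * B)"
    using r by simp
  also have "\<dots> \<le> (A / r) powr p / p + (r * B) powr q / q"
    using assms r by (intro Youngs_inequality) auto
  also have "\<dots> \<le> (A / r) powr p + (r * B) powr q"
    using assms mult_left_mono[of 1 p "(A / r) powr p"] mult_left_mono[of 1 q "(r * B) powr q"]
    by (intro add_mono) (auto simp: divide_le_eq)
  also have "\<dots> = s powr (1 - p) * A powr p + s * B powr q"
    using assms r by (simp add: powr_mult powr_divide powr_diff)
  finally show ?thesis .
qed

lemma dG_nonpos [simp]: "\<alpha> \<le> 0 \<Longrightarrow> dG \<alpha> w u = u"
  by (simp add: dG_def)

definition dG_dev :: "real \<Rightarrow> real \<Rightarrow> real" where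
  "dG_dev \<alpha> s = \<bar>s powr \<alpha> - 1\<bar> + \<alpha> * s powr \<alpha>"

lemma dG_dev_nonneg: "0 \<le> \<alpha> \<Longrightarrow> 0 \<le> dG_dev \<alpha> s"
  by (simp add: dG_dev_def)

lemma norm_dG_minus_id_le:
  assumes "0 < \<alpha>"
  shows "norm (dG \<alpha> w u x - u x) \<le> dG_dev \<alpha> (norm (w x)) * norm (u x)"
proof (cases "w x = 0")
  case True
  then show ?thesis using assms by (simp add: dG_def dG_dev_def)
next
  case False
  define n where "n = norm (w x)"
  define c where "c = \<alpha> * n powr (\<alpha> - 2) * Re (cnj (w x) * u x)"
  have n: "n > 0" using False by (simp add: n_def)
  have "\<bar>Re (cnj (w x) * u x)\<bar> \<le> n * norm (u x)"
    using abs_Re_le_cmod[of "cnj (w x) * u x"] by (simp add: norm_mult n_def)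
  then have "\<bar>c\<bar> * n \<le> \<alpha> * (n powr (\<alpha> - 2) * n powr 2) * norm (u x)"
    using assms n by (auto simp: c_def abs_mult powr_numeral power2_eq_square mult_ac
        intro!: mult_left_mono)
  also have "n powr (\<alpha> - 2) * n powr 2 = n powr \<alpha>"
    by (simp add: powr_add [symmetric])
  finally have c: "\<bar>c\<bar> * n \<le> \<alpha> * n powr \<alpha> * norm (u x)" .
  have "dG \<alpha> w u x - u x = of_real (n powr \<alpha> - 1) * u x + of_real c * w x"
    using assms False by (simp add: dG_def n_def c_def algebra_simps)
  also have "norm \<dots> \<le> \<bar>n powr \<alpha> - 1\<bar> * norm (u x) + \<bar>c\<bar> * n"
    by (rule order_trans[OF norm_triangle_ineq]) (simp add: norm_mult n_def del: of_real_diff)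
  also have "\<dots> \<le> dG_dev \<alpha> n * norm (u x)"
    using c by (simp add: dG_dev_def algebra_simps)
  finally show ?thesis by (simp add: n_def)
qed

definition band_bound :: "real \<Rightarrow> real \<Rightarrow> real \<Rightarrow> real" where
  "band_bound \<eta> K \<beta> = K powr \<beta> - \<eta> powr \<beta> + \<beta> * K powr \<beta>"

lemma dG_dev_le_on_band:
  fixes \<alpha> \<beta> \<eta> K s :: real
  assumes "0 < \<alpha>" "\<alpha> \<le> \<beta>" "0 < \<eta>" "\<eta> \<le> 1" "1 \<le> K" "\<eta> \<le> s" "s \<le> K"
  shows "dG_dev \<alpha> s \<le> band_bound \<eta> K \<beta>"
proof -
  have up: "s powr \<alpha> \<le> K powr \<beta>"
    using powr_mono2[of \<alpha> s K] powr_mono[of \<alpha> \<beta> K] assms by linarith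
  have lo: "\<eta> powr \<beta> \<le> s powr \<alpha>"
    using powr_mono2[of \<alpha> \<eta> s] powr_mono'[of \<alpha> \<beta> \<eta>] assms by linarith
  have "1 \<le> K powr \<beta>" "\<eta> powr \<beta> \<le> 1"
    using assms by (auto intro: ge_one_powr_ge_zero powr_le1)
  moreover have "\<alpha> * s powr \<alpha> \<le> \<beta> * K powr \<beta>"
    using up assms by (intro mult_mono) auto
  ultimately show ?thesis
    using up lo by (auto simp: dG_dev_def band_bound_def abs_if)
qed

lemma band_bound_powr_tendsto_zero:
  assumes "0 < \<eta>" "\<eta> \<le> 1" "1 \<le> K" "0 < q"
  shows "((\<lambda>\<beta>. band_bound \<eta> K \<beta> powr q) \<longlongrightarrow> 0) (at_right 0)"
proof (rule tendsto_zero_powrI[where b = q])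
  show "((\<lambda>\<beta>. band_bound \<eta> K \<beta>) \<longlongrightarrow> 0) (at_right 0)"
    using assms unfolding band_bound_def by (auto intro!: tendsto_eq_intros)
  show "eventually (\<lambda>\<beta>. 0 \<le> band_bound \<eta> K \<beta>) (at_right 0)"
    using eventually_at_right_less[of 0]
  proof eventually_elim
    case (elim \<beta>)
    then have "\<eta> powr \<beta> \<le> 1" "1 \<le> K powr \<beta>"
      using assms by (auto intro: powr_le1 ge_one_powr_ge_zero)
    then show ?case
      using elim by (simp add: band_bound_def)
  qed
qed (use assms in auto)

lemma dG_dev_powr_le_growth:
  fixes \<alpha> a q s :: real
  assumes "0 < \<alpha>" "\<alpha> \<le> a" "0 < q" "0 \<le> s"
  shows "dG_dev \<alpha> s powr q \<le> (4 + 2*a) powr q * (1 + s powr (a * q))"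
proof -
  have le: "s powr \<alpha> \<le> 1 + s powr a"
  proof (cases "s \<le> 1")
    case True
    then show ?thesis using assms powr_le1[of \<alpha> s] by (simp add: add_increasing2)
  next
    case False
    then show ?thesis using assms powr_mono[of \<alpha> a s] by (simp add: add_increasing)
  qed
  then have "\<bar>s powr \<alpha> - 1\<bar> \<le> 2 * (1 + s powr a)"
    by (smt (verit) powr_ge_zero)
  moreover have "\<alpha> * s powr \<alpha> \<le> a * (1 + s powr a)"
    using le assms by (intro mult_mono) auto
  ultimately have "dG_dev \<alpha> s \<le> (2 + a) * (1 + s powr a)"
    by (simp add: dG_dev_def distrib_right)
  then have "dG_dev \<alpha> s powr q \<le> (2 + a) powr q * (1 + s powr a) powr q"
    using assms dG_dev_nonneg[of \<alpha> s] by (auto intro: order_trans[OF powr_mono2] simp: powr_mult)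
  also have "(1 + s powr a) powr q \<le> 2 powr q * (1 + s powr (a * q))"
    using powr_add_le_two_powr[of 1 "s powr a" q] assms by (simp add: powr_powr)
  also have "(2 + a) powr q * (2 powr q * (1 + s powr (a * q))) = (4 + 2*a) powr q * (1 + s powr (a * q))"
    using assms powr_mult[of "2 + a" 2 q] by (simp add: algebra_simps)
  finally show ?thesis
    by (simp add: mult_left_mono)
qed

definition off_band_weight :: "real \<Rightarrow> real \<Rightarrow> real \<Rightarrow> real \<Rightarrow> real" where
  "off_band_weight p \<eta> K r = (if \<eta> \<le> r \<and> r \<le> K then 0 else 1 + 2 powr (p+1) * r powr p)"

lemma off_band_weight_nonneg: "0 \<le> off_band_weight p \<eta> K r"
  by (simp add: off_band_weight_def)

lemma off_band_powr_le:
  fixes s r d \<eta> K p :: real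
  assumes "0 \<le> s" "0 \<le> r" "0 \<le> d" "s \<le> r + d" "r \<le> s + d" "0 < \<eta>" "\<eta> \<le> K" "0 < p"
  shows "(if \<eta>/2 \<le> s \<and> s \<le> 2*K then 0 else 1 + s powr p)
    \<le> off_band_weight p \<eta> K r
      + ((1 + 2 powr p * K powr p) / (\<eta>/2) powr p + 2 powr p) * d powr p"
    (is "?lhs \<le> ?tail + ?c * d powr p")
proof -
  have s: "s powr p \<le> 2 powr p * r powr p + 2 powr p * d powr p"
    using powr_mono2[of p s "r + d"] powr_add_le_two_powr[of r d p] assms
    by (simp add: distrib_left)
  have tail: "0 \<le> ?tail" and c: "0 \<le> ?c"
    by (auto simp: off_band_weight_nonneg)
  consider "\<eta>/2 \<le> s \<and> s \<le> 2*K" | "\<not> (\<eta> \<le> r \<and> r \<le> K)"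
    | "\<eta> \<le> r \<and> r \<le> K" "\<not> (\<eta>/2 \<le> s \<and> s \<le> 2*K)"
    by blast
  then show ?thesis
  proof cases
    case 1
    then show ?thesis using tail c by simp
  next
    case 2
    then have "?tail = 1 + 2 * (2 powr p * r powr p)"
      by (auto simp: off_band_weight_def powr_add)
    moreover have "2 powr p * d powr p \<le> ?c * d powr p"
      by (intro mult_right_mono) auto
    moreover have "?lhs \<le> 1 + s powr p" "0 \<le> 2 powr p * r powr p"
      by auto
    ultimately show ?thesis
      using s by linarith
  next
    case 3
    then have "\<eta>/2 \<le> d"
      using assms by auto
    then have "1 + 2 powr p * K powr p \<le> (1 + 2 powr p * K powr p) / (\<eta>/2) powr p * d powr p"
      using assms powr_mono2[of p "\<eta>/2" d] by (simp add: divide_simps mult_left_mono)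
    moreover have "2 powr p * r powr p \<le> 2 powr p * K powr p"
      using 3 assms by (intro mult_left_mono powr_mono2) auto
    moreover have "?c * d powr p = (1 + 2 powr p * K powr p) / (\<eta>/2) powr p * d powr p + 2 powr p * d powr p"
      by (simp add: distrib_right)
    moreover have "?lhs = 1 + s powr p" "?tail = 0"
      using 3 by (auto simp: off_band_weight_def)
    ultimately show ?thesis
      using s by linarith
  qed
qed

lemma dG_dev_powr_le_split:
  fixes z x :: "'b::real_normed_vector" and a q p \<alpha> \<beta> \<eta> K :: real
  assumes "p = a * q" "0 < q" "0 < \<alpha>" "\<alpha> \<le> \<beta>" "\<beta> \<le> a" "0 < \<eta>" "\<eta> \<le> 1" "1 \<le> K"
  shows "dG_dev \<alpha> (norm z) powr q
    \<le> band_bound (\<eta>/2) (2*K) \<beta> powr q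
      + (4 + 2*a) powr q * (off_band_weight p \<eta> K (norm x)
         + ((1 + 2 powr p * K powr p) / (\<eta>/2) powr p + 2 powr p) * norm (z - x) powr p)"
    (is "_ \<le> band_bound _ _ _ powr q + ?C * ?off")
proof (cases "\<eta>/2 \<le> norm z \<and> norm z \<le> 2*K")
  case True
  then have "dG_dev \<alpha> (norm z) \<le> band_bound (\<eta>/2) (2*K) \<beta>"
    using assms by (intro dG_dev_le_on_band) auto
  then have "dG_dev \<alpha> (norm z) powr q \<le> band_bound (\<eta>/2) (2*K) \<beta> powr q"
    using assms dG_dev_nonneg[of \<alpha>] by (intro powr_mono2) auto
  moreover have "0 \<le> ?C * ?off"
    using assms by (auto simp: off_band_weight_nonneg)
  ultimately show ?thesis
    by linarith
next
  case False
  have p: "0 < p"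
    using assms by simp
  have "dG_dev \<alpha> (norm z) powr q \<le> ?C * (1 + norm z powr p)"
    using assms dG_dev_powr_le_growth[of \<alpha> a q "norm z"] by simp
  also have "1 + norm z powr p \<le> ?off"
    using off_band_powr_le[of "norm z" "norm x" "norm (z - x)" \<eta> K p] False assms p
      norm_triangle_ineq2[of z x] norm_triangle_ineq3[of x z] by (auto simp: norm_minus_commute)
  then have "?C * (1 + norm z powr p) \<le> ?C * ?off"
    by (intro mult_left_mono) auto
  finally show ?thesis
    by (simp add: add_increasing)
qed

lemma integrable_off_band_weight:
  fixes v :: "'a \<Rightarrow> 'b::real_normed_vector"
  assumes "finite_measure M" "v \<in> borel_measurable M" "integrable M (\<lambda>x. norm (v x) powr p)"
  shows "integrable M (\<lambda>x. off_band_weight p \<eta> K (norm (v x)))"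
proof (rule Bochner_Integration.integrable_bound)
  interpret finite_measure M by fact
  show "integrable M (\<lambda>x. 1 + 2 powr (p+1) * norm (v x) powr p)"
    using assms by auto
  show "(\<lambda>x. off_band_weight p \<eta> K (norm (v x))) \<in> borel_measurable M"
    unfolding off_band_weight_def using assms(2) by measurable
  show "AE x in M. norm (off_band_weight p \<eta> K (norm (v x))) \<le> norm (1 + 2 powr (p+1) * norm (v x) powr p)"
    by (auto simp: off_band_weight_def)
qed

lemma integral_off_band_weight_tendsto_zero:
  fixes v :: "'a \<Rightarrow> 'b::real_normed_vector"
  assumes "finite_measure M" "v \<in> borel_measurable M" "integrable M (\<lambda>x. norm (v x) powr p)"
    and "AE x in M. v x \<noteq> 0"
  shows "(\<lambda>n. \<integral>x. off_band_weight p (1 / Suc n) (Suc n) (norm (v x)) \<partial>M) \<longlonglongrightarrow> 0"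
proof -
  interpret finite_measure M by fact
  have "(\<lambda>n. \<integral>x. off_band_weight p (1 / Suc n) (Suc n) (norm (v x)) \<partial>M) \<longlonglongrightarrow> (\<integral>x. 0 \<partial>M)"
  proof (rule integral_dominated_convergence)
    show "integrable M (\<lambda>x. 1 + 2 powr (p+1) * norm (v x) powr p)"
      using assms by auto
    show "(\<lambda>x. off_band_weight p (1 / Suc n) (Suc n) (norm (v x))) \<in> borel_measurable M" for n
      unfolding off_band_weight_def using assms(2) by measurable
    show "AE x in M. norm (off_band_weight p (1 / Suc n) (Suc n) (norm (v x)))
        \<le> 1 + 2 powr (p+1) * norm (v x) powr p" for n
      by (auto simp: off_band_weight_def)
    show "AE x in M. (\<lambda>n. off_band_weight p (1 / Suc n) (Suc n) (norm (v x))) \<longlonglongrightarrow> 0"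
      using assms(4)
    proof eventually_elim
      fix x assume "v x \<noteq> 0"
      then have "eventually (\<lambda>n. 1 / Suc n < norm (v x)) sequentially"
        by (intro order_tendstoD(2)[OF lim_1_over_n[THEN LIMSEQ_Suc]]) simp
      moreover have "eventually (\<lambda>n. norm (v x) \<le> Suc n) sequentially"
        using eventually_ge_at_top[of "nat \<lceil>norm (v x)\<rceil>"]
        by (rule eventually_mono) (meson le_SucI of_nat_le_iff order_trans real_nat_ceiling_ge)
      ultimately have "eventually (\<lambda>n. 1 / Suc n \<le> norm (v x) \<and> norm (v x) \<le> Suc n) sequentially"
        by eventually_elim simp
      then have "eventually (\<lambda>n. off_band_weight p (1 / Suc n) (Suc n) (norm (v x)) = 0) sequentially"
        by (rule eventually_mono) (simp add: off_band_weight_def)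
      then show "(\<lambda>n. off_band_weight p (1 / Suc n) (Suc n) (norm (v x))) \<longlonglongrightarrow> 0"
        by (rule tendsto_eventually)
    qed
  qed simp
  then show ?thesis
    by simp
qed

lemma integrable_norm_diff_powr:
  fixes v w :: "'a \<Rightarrow> 'b::{real_normed_vector, second_countable_topology}"
  assumes "v \<in> borel_measurable M" "w \<in> borel_measurable M" "0 < p"
    and "integrable M (\<lambda>x. norm (v x) powr p)" "integrable M (\<lambda>x. norm (w x) powr p)"
  shows "integrable M (\<lambda>x. norm (w x - v x) powr p)"
proof (rule Bochner_Integration.integrable_bound)
  show "integrable M (\<lambda>x. 2 powr p * (norm (w x) powr p + norm (v x) powr p))"
    using assms by auto
  show "(\<lambda>x. norm (w x - v x) powr p) \<in> borel_measurable M"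
    using assms(1,2) by measurable
  have "norm (w x - v x) powr p \<le> 2 powr p * (norm (w x) powr p + norm (v x) powr p)" for x
    using assms norm_triangle_ineq4[of "w x" "v x"] powr_add_le_two_powr[of "norm (w x)" "norm (v x)" p]
    by (auto intro: order_trans[OF powr_mono2])
  then show "AE x in M. norm (norm (w x - v x) powr p)
      \<le> norm (2 powr p * (norm (w x) powr p + norm (v x) powr p))"
    by simp
qed

lemma integrable_dG_dev_powr:
  fixes w :: "'a \<Rightarrow> 'b::real_normed_vector"
  assumes "finite_measure M" "w \<in> borel_measurable M" "integrable M (\<lambda>x. norm (w x) powr (a * q))"
    and "0 < \<alpha>" "\<alpha> \<le> a" "0 < q"
  shows "integrable M (\<lambda>x. dG_dev \<alpha> (norm (w x)) powr q)"
proof (rule Bochner_Integration.integrable_bound)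
  interpret finite_measure M by fact
  show "integrable M (\<lambda>x. (4 + 2*a) powr q * (1 + norm (w x) powr (a * q)))"
    using assms by auto
  show "(\<lambda>x. dG_dev \<alpha> (norm (w x)) powr q) \<in> borel_measurable M"
    unfolding dG_dev_def using assms(2) by measurable
  show "AE x in M. norm (dG_dev \<alpha> (norm (w x)) powr q)
      \<le> norm ((4 + 2*a) powr q * (1 + norm (w x) powr (a * q)))"
    using assms dG_dev_powr_le_growth[of \<alpha> a q] by auto
qed

lemma integral_dG_dev_powr_le:
  fixes v w :: "'a \<Rightarrow> 'b::{real_normed_vector, second_countable_topology}"
  assumes "finite_measure M" "v \<in> borel_measurable M" "w \<in> borel_measurable M"
    and "integrable M (\<lambda>x. norm (v x) powr p)" "integrable M (\<lambda>x. norm (w x) powr p)"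
    and "p = a * q" "0 < q" "0 < \<alpha>" "\<alpha> \<le> \<beta>" "\<beta> \<le> a" "0 < \<eta>" "\<eta> \<le> 1" "1 \<le> K"
  shows "(\<integral>x. dG_dev \<alpha> (norm (w x)) powr q \<partial>M)
    \<le> band_bound (\<eta>/2) (2*K) \<beta> powr q * measure M (space M)
      + (4 + 2*a) powr q * ((\<integral>x. off_band_weight p \<eta> K (norm (v x)) \<partial>M)
         + ((1 + 2 powr p * K powr p) / (\<eta>/2) powr p + 2 powr p) * (\<integral>x. norm (w x - v x) powr p \<partial>M))"
proof -
  interpret finite_measure M by fact
  have "0 < p"
    using assms by simp
  then have diff: "integrable M (\<lambda>x. norm (w x - v x) powr p)"
    using assms by (intro integrable_norm_diff_powr)
  have off: "integrable M (\<lambda>x. off_band_weight p \<eta> K (norm (v x)))"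
    using assms by (intro integrable_off_band_weight)
  let ?band = "band_bound (\<eta>/2) (2*K) \<beta>"
  let ?C = "(4 + 2*a) powr q" and ?c = "(1 + 2 powr p * K powr p) / (\<eta>/2) powr p + 2 powr p"
  have "(\<integral>x. dG_dev \<alpha> (norm (w x)) powr q \<partial>M)
      \<le> (\<integral>x. ?band powr q + ?C * (off_band_weight p \<eta> K (norm (v x)) + ?c * norm (w x - v x) powr p) \<partial>M)"
    using assms diff off dG_dev_powr_le_split[of p a q \<alpha> \<beta> \<eta> K]
      integrable_dG_dev_powr[of M w a q \<alpha>]
    by (intro integral_mono) auto
  also have "\<dots> = ?band powr q * measure M (space M)
      + ?C * ((\<integral>x. off_band_weight p \<eta> K (norm (v x)) \<partial>M) + ?c * (\<integral>x. norm (w x - v x) powr p \<partial>M))"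
    using diff off by simp
  finally show ?thesis .
qed

lemma band_parameters_exist:
  fixes v :: "'a \<Rightarrow> 'b::real_normed_vector"
  assumes "finite_measure M" "v \<in> borel_measurable M" "integrable M (\<lambda>x. norm (v x) powr p)"
    and "AE x in M. v x \<noteq> 0" "0 < a" "0 < q" "0 < \<rho>"
  shows "\<exists>\<eta> K \<beta>. 0 < \<eta> \<and> \<eta> \<le> 1 \<and> 1 \<le> K \<and> 0 < \<beta> \<and> \<beta> < a
    \<and> (\<integral>x. off_band_weight p \<eta> K (norm (v x)) \<partial>M) < \<rho>
    \<and> band_bound (\<eta>/2) (2*K) \<beta> powr q * measure M (space M) < \<rho>"
proof -
  obtain n where n: "(\<integral>x. off_band_weight p (1 / Suc n) (Suc n) (norm (v x)) \<partial>M) < \<rho>"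
    using order_tendstoD(2)[OF integral_off_band_weight_tendsto_zero[OF assms(1-4)] assms(7)]
    by (auto dest: eventually_happens'[OF sequentially_bot])
  define \<eta> where "\<eta> = 1 / real (Suc n)"
  define K where "K = real (Suc n)"
  have \<eta>K: "0 < \<eta>" "\<eta> \<le> 1" "1 \<le> K"
    by (auto simp: \<eta>_def K_def)
  have "((\<lambda>\<beta>. band_bound (\<eta>/2) (2*K) \<beta> powr q * measure M (space M)) \<longlongrightarrow> 0) (at_right 0)"
    using \<eta>K assms(6) by (intro tendsto_mult_left_zero band_bound_powr_tendsto_zero) auto
  then have "eventually (\<lambda>\<beta>. band_bound (\<eta>/2) (2*K) \<beta> powr q * measure M (space M) < \<rho>) (at_right 0)"
    using assms(7) by (intro order_tendstoD(2))
  moreover have "eventually (\<lambda>\<beta>. \<beta> \<in> {0<..<a}) (at_right 0)"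
    using assms(5) by (rule eventually_at_right_real)
  ultimately obtain \<beta> where "0 < \<beta>" "\<beta> < a" "band_bound (\<eta>/2) (2*K) \<beta> powr q * measure M (space M) < \<rho>"
    by (auto dest: eventually_happens'[OF trivial_limit_at_right_real eventually_conj])
  then show ?thesis
    using \<eta>K n unfolding \<eta>_def K_def by blast
qed

lemma integral_dG_dev_powr_small:
  fixes v :: "'a \<Rightarrow> 'b::{real_normed_vector, second_countable_topology}"
  assumes "finite_measure M" "v \<in> borel_measurable M" "integrable M (\<lambda>x. norm (v x) powr p)"
    and "AE x in M. v x \<noteq> 0" "p = a * q" "0 < a" "0 < q" "0 < R"
  shows "\<exists>\<delta>>0. \<forall>\<alpha> w. 0 < \<alpha> \<and> \<alpha> < \<delta> \<and> \<alpha> \<le> a \<and> w \<in> borel_measurable M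
    \<and> integrable M (\<lambda>x. norm (w x) powr p) \<and> (\<integral>x. norm (w x - v x) powr p \<partial>M) < \<delta>
    \<longrightarrow> (\<integral>x. dG_dev \<alpha> (norm (w x)) powr q \<partial>M) \<le> R"
proof -
  define C where "C = (4 + 2*a) powr q"
  have C: "1 \<le> C"
    using assms by (simp add: C_def ge_one_powr_ge_zero)
  obtain \<eta> K \<beta> where \<eta>K: "0 < \<eta>" "\<eta> \<le> 1" "1 \<le> K" and \<beta>: "0 < \<beta>" "\<beta> < a"
    and off: "(\<integral>x. off_band_weight p \<eta> K (norm (v x)) \<partial>M) < R / (3*C)"
    and band: "band_bound (\<eta>/2) (2*K) \<beta> powr q * measure M (space M) < R / (3*C)"
    using band_parameters_exist[OF assms(1-4,6,7), of "R / (3*C)"] C assms(8) by auto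
  define c where "c = (1 + 2 powr p * K powr p) / (\<eta>/2) powr p + 2 powr p"
  have c: "0 \<le> c"
    by (simp add: c_def)
  define \<delta> where "\<delta> = min \<beta> (R / (3 * C * (c + 1)))"
  have "0 < \<delta>"
    using \<beta> C c assms(8) by (simp add: \<delta>_def add_nonneg_pos)
  moreover have "(\<integral>x. dG_dev \<alpha> (norm (w x)) powr q \<partial>M) \<le> R"
    if "0 < \<alpha>" "\<alpha> < \<delta>" "w \<in> borel_measurable M" "integrable M (\<lambda>x. norm (w x) powr p)"
      and close: "(\<integral>x. norm (w x - v x) powr p \<partial>M) < \<delta>" for \<alpha> w
  proof -
    have "c * (\<integral>x. norm (w x - v x) powr p \<partial>M) \<le> (c + 1) * (R / (3 * C * (c + 1)))"
      using close c by (intro mult_mono) (auto simp: \<delta>_def)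
    also have "\<dots> = R / (3*C)"
      using C c by (simp add: divide_simps)
    finally have "C * ((\<integral>x. off_band_weight p \<eta> K (norm (v x)) \<partial>M) + c * (\<integral>x. norm (w x - v x) powr p \<partial>M))
        \<le> C * (2 * (R / (3*C)))"
      using off C by (intro mult_left_mono) auto
    also have "\<dots> = 2 * R / 3"
      using C by simp
    moreover have "R / (3*C) \<le> R / 3"
      using C assms(8) by (simp add: field_simps)
    moreover have "(\<integral>x. dG_dev \<alpha> (norm (w x)) powr q \<partial>M)
      \<le> band_bound (\<eta>/2) (2*K) \<beta> powr q * measure M (space M)
        + C * ((\<integral>x. off_band_weight p \<eta> K (norm (v x)) \<partial>M) + c * (\<integral>x. norm (w x - v x) powr p \<partial>M))"
      unfolding C_def c_def
      using that \<beta> \<eta>K assms by (intro integral_dG_dev_powr_le) (auto simp: \<delta>_def)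
    ultimately show ?thesis
      using band by linarith
  qed
  ultimately show ?thesis
    by blast
qed

lemma integral_norm_dG_minus_id_le:
  fixes w u :: "'a \<Rightarrow> complex"
  assumes "0 < a" "0 < \<alpha>" "0 < s"
    and "integrable M (\<lambda>x. dG_dev \<alpha> (norm (w x)) powr (2*(a+1)/a))"
    and "integrable M (\<lambda>x. norm (u x) powr (2*(a+1)))"
  shows "(\<integral>x. norm (dG \<alpha> w u x - u x) powr 2 \<partial>M)
    \<le> s powr (-1/a) * (\<integral>x. dG_dev \<alpha> (norm (w x)) powr (2*(a+1)/a) \<partial>M)
      + s * (\<integral>x. norm (u x) powr (2*(a+1)) \<partial>M)"
proof -
  have "norm (dG \<alpha> w u x - u x) powr 2
      \<le> s powr (-1/a) * dG_dev \<alpha> (norm (w x)) powr (2*(a+1)/a) + s * norm (u x) powr (2*(a+1))" for x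
  proof -
    let ?d = "dG_dev \<alpha> (norm (w x))"
    have "norm (dG \<alpha> w u x - u x) powr 2 \<le> (?d * norm (u x)) powr 2"
      using assms by (intro powr_mono2 norm_dG_minus_id_le) auto
    also have "\<dots> = ?d powr 2 * norm (u x) powr 2"
      using assms dG_dev_nonneg[of \<alpha>] by (simp add: powr_mult)
    also have "\<dots> \<le> s powr (1 - (a+1)/a) * (?d powr 2) powr ((a+1)/a) + s * (norm (u x) powr 2) powr (a+1)"
      using assms by (intro Youngs_inequality_scaled) (auto simp: field_simps)
    also have "1 - (a+1)/a = -1/a"
      using assms by (simp add: field_simps)
    finally show ?thesis
      by (simp only: powr_powr times_divide_eq_right)
  qed
  then have "(\<integral>x. norm (dG \<alpha> w u x - u x) powr 2 \<partial>M)
      \<le> (\<integral>x. s powr (-1/a) * dG_dev \<alpha> (norm (w x)) powr (2*(a+1)/a) + s * norm (u x) powr (2*(a+1)) \<partial>M)"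
    using assms by (intro integral_mono') auto
  also have "\<dots> = s powr (-1/a) * (\<integral>x. dG_dev \<alpha> (norm (w x)) powr (2*(a+1)/a) \<partial>M)
      + s * (\<integral>x. norm (u x) powr (2*(a+1)) \<partial>M)"
    using assms by simp
  finally show ?thesis .
qed

lemma Lpnorm_nonneg: "0 \<le> Lpnorm \<Omega> r f"
  by (simp add: Lpnorm_def)

lemma Lpnorm_powr:
  assumes "0 < r"
  shows "Lpnorm \<Omega> r f powr r = (\<integral>x. norm (f x) powr r \<partial>lebesgue_on \<Omega>)"
  using assms by (simp add: Lpnorm_def powr_powr)

lemma Lpnorm_less_imp_integral_less:
  assumes "0 < r" "Lpnorm \<Omega> r f < c"
  shows "(\<integral>x. norm (f x) powr r \<partial>lebesgue_on \<Omega>) < c powr r"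
  by (simp only: Lpnorm_powr[OF assms(1), symmetric])
    (rule powr_less_mono2[OF assms(1) Lpnorm_nonneg assms(2)])

lemma Lpnorm_le_imp_integral_le:
  assumes "0 < r" "Lpnorm \<Omega> r f \<le> c"
  shows "(\<integral>x. norm (f x) powr r \<partial>lebesgue_on \<Omega>) \<le> c powr r"
  by (simp only: Lpnorm_powr[OF assms(1), symmetric])
    (rule powr_mono2[OF less_imp_le[OF assms(1)] Lpnorm_nonneg assms(2)])

lemma opnorm_p2_le_sqrt:
  assumes "\<And>u. memLp \<Omega> p u \<Longrightarrow> Lpnorm \<Omega> p u \<le> 1 \<Longrightarrow>
      (\<integral>x. norm (T u x) powr 2 \<partial>lebesgue_on \<Omega>) \<le> E"
  shows "opnorm_p2 \<Omega> p T \<le> ereal (sqrt E)"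
  unfolding opnorm_p2_def
proof (rule SUP_least)
  fix u assume "u \<in> {u. memLp \<Omega> p u \<and> Lpnorm \<Omega> p u \<le> 1}"
  then have le: "(\<integral>x. norm (T u x) powr 2 \<partial>lebesgue_on \<Omega>) \<le> E"
    using assms by blast
  have "Lpnorm \<Omega> 2 (T u) = sqrt (\<integral>x. norm (T u x) powr 2 \<partial>lebesgue_on \<Omega>)"
    by (simp add: Lpnorm_def powr_half_sqrt)
  also have "\<dots> \<le> sqrt E"
    using le by simp
  finally show "ereal (Lpnorm \<Omega> 2 (T u)) \<le> ereal (sqrt E)"
    by simp
qed

lemma opnorm_p2_dG_minus_id_le:
  fixes \<Omega> :: "'n::euclidean_space set"
  assumes "finite_measure (lebesgue_on \<Omega>)" "p = 2*(a+1)" "0 < \<alpha>" "\<alpha> \<le> a" "memLp \<Omega> p w" "0 < s"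
  shows "opnorm_p2 \<Omega> p (\<lambda>u x. dG \<alpha> w u x - u x)
    \<le> ereal (sqrt (s powr (-1/a) * (\<integral>x. dG_dev \<alpha> (norm (w x)) powr (p/a) \<partial>lebesgue_on \<Omega>) + s))"
proof (rule opnorm_p2_le_sqrt)
  fix u
  assume u: "memLp \<Omega> p u" "Lpnorm \<Omega> p u \<le> 1"
  have a: "0 < a" "p/a = 2*(a+1)/a"
    using assms by auto
  have "integrable (lebesgue_on \<Omega>) (\<lambda>x. dG_dev \<alpha> (norm (w x)) powr (2*(a+1)/a))"
    using integrable_dG_dev_powr[OF assms(1), of w a "2*(a+1)/a" \<alpha>] assms by (simp add: memLp_def)
  moreover have "integrable (lebesgue_on \<Omega>) (\<lambda>x. norm (u x) powr (2*(a+1)))"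
    using u assms by (simp add: memLp_def)
  ultimately have "(\<integral>x. norm (dG \<alpha> w u x - u x) powr 2 \<partial>lebesgue_on \<Omega>)
      \<le> s powr (-1/a) * (\<integral>x. dG_dev \<alpha> (norm (w x)) powr (2*(a+1)/a) \<partial>lebesgue_on \<Omega>)
        + s * (\<integral>x. norm (u x) powr (2*(a+1)) \<partial>lebesgue_on \<Omega>)"
    by (rule integral_norm_dG_minus_id_le[OF a(1) assms(3,6)])
  moreover have "s * (\<integral>x. norm (u x) powr (2*(a+1)) \<partial>lebesgue_on \<Omega>) \<le> s"
    using u assms a Lpnorm_le_imp_integral_le[of p \<Omega> u 1] by (intro mult_left_le) auto
  ultimately show "(\<integral>x. norm (dG \<alpha> w u x - u x) powr 2 \<partial>lebesgue_on \<Omega>)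
      \<le> s powr (-1/a) * (\<integral>x. dG_dev \<alpha> (norm (w x)) powr (p/a) \<partial>lebesgue_on \<Omega>) + s"
    unfolding a(2) by linarith
qed

lemma opnorm_p2_dG_minus_id_small:
  fixes \<Omega> :: "'n::euclidean_space set"
  assumes "finite_measure (lebesgue_on \<Omega>)" "0 < a" "p = 2*(a+1)" "0 < \<epsilon>"
  shows "\<exists>R>0. \<forall>\<alpha> w. 0 < \<alpha> \<and> \<alpha> \<le> a \<and> memLp \<Omega> p w
    \<and> (\<integral>x. dG_dev \<alpha> (norm (w x)) powr (p/a) \<partial>lebesgue_on \<Omega>) \<le> R
    \<longrightarrow> opnorm_p2 \<Omega> p (\<lambda>u x. dG \<alpha> w u x - u x) \<le> ereal \<epsilon>"
proof -
  define s where "s = \<epsilon>\<^sup>2 / 2"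
  have s: "0 < s"
    using assms by (simp add: s_def)
  have "opnorm_p2 \<Omega> p (\<lambda>u x. dG \<alpha> w u x - u x) \<le> ereal \<epsilon>"
    if "0 < \<alpha>" "\<alpha> \<le> a" "memLp \<Omega> p w"
      and dev: "(\<integral>x. dG_dev \<alpha> (norm (w x)) powr (p/a) \<partial>lebesgue_on \<Omega>) \<le> s powr (1 + 1/a)" for \<alpha> w
  proof -
    have "s powr (-1/a) * (\<integral>x. dG_dev \<alpha> (norm (w x)) powr (p/a) \<partial>lebesgue_on \<Omega>)
        \<le> s powr (-1/a) * s powr (1 + 1/a)"
      using dev by (intro mult_left_mono) auto
    also have "\<dots> = s"
      using s by (simp add: powr_add[symmetric])
    finally have "s powr (-1/a) * (\<integral>x. dG_dev \<alpha> (norm (w x)) powr (p/a) \<partial>lebesgue_on \<Omega>) + s \<le> \<epsilon>\<^sup>2"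
      unfolding s_def by linarith
    then have "sqrt (s powr (-1/a) * (\<integral>x. dG_dev \<alpha> (norm (w x)) powr (p/a) \<partial>lebesgue_on \<Omega>) + s) \<le> \<epsilon>"
      using assms(4) real_sqrt_le_mono by fastforce
    then show ?thesis
      using opnorm_p2_dG_minus_id_le[OF assms(1,3) that(1-3) s] order_trans by fastforce
  qed
  moreover have "0 < s powr (1 + 1/a)"
    using s by simp
  ultimately show ?thesis
    by blast
qed

lemma opnorm_p2_dG_minus_id_continuous:
  fixes \<Omega> :: "'n::euclidean_space set" and v :: "'n \<Rightarrow> complex"
  assumes "finite_measure (lebesgue_on \<Omega>)" "0 < a" "p = 2*(a+1)" "memLp \<Omega> p v"
    and "AE x in lebesgue_on \<Omega>. v x \<noteq> 0" "0 < \<epsilon>"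
  shows "\<exists>\<delta>>0. \<forall>\<alpha> w. 0 < \<alpha> \<and> \<alpha> \<le> a \<and> \<alpha> < \<delta> \<and> memLp \<Omega> p w \<and> Lpnorm \<Omega> p (\<lambda>x. w x - v x) < \<delta>
    \<longrightarrow> opnorm_p2 \<Omega> p (\<lambda>u x. dG \<alpha> w u x - u x) \<le> ereal \<epsilon>"
proof -
  have p: "p = a * (p/a)" "0 < p" "0 < p/a"
    using assms(2,3) by auto
  obtain R where "0 < R" and small_opnorm: "\<forall>\<alpha> w. 0 < \<alpha> \<and> \<alpha> \<le> a \<and> memLp \<Omega> p w
      \<and> (\<integral>x. dG_dev \<alpha> (norm (w x)) powr (p/a) \<partial>lebesgue_on \<Omega>) \<le> R
      \<longrightarrow> opnorm_p2 \<Omega> p (\<lambda>u x. dG \<alpha> w u x - u x) \<le> ereal \<epsilon>"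
    using opnorm_p2_dG_minus_id_small[OF assms(1-3,6)] by blast
  obtain \<delta> where "0 < \<delta>" and small_dev: "\<forall>\<alpha> w. 0 < \<alpha> \<and> \<alpha> < \<delta> \<and> \<alpha> \<le> a
      \<and> w \<in> borel_measurable (lebesgue_on \<Omega>) \<and> integrable (lebesgue_on \<Omega>) (\<lambda>x. norm (w x) powr p)
      \<and> (\<integral>x. norm (w x - v x) powr p \<partial>lebesgue_on \<Omega>) < \<delta>
      \<longrightarrow> (\<integral>x. dG_dev \<alpha> (norm (w x)) powr (p/a) \<partial>lebesgue_on \<Omega>) \<le> R"
    using integral_dG_dev_powr_small[OF assms(1) _ _ assms(5) p(1) assms(2) p(3) \<open>0 < R\<close>] assms(4)
    by (auto simp: memLp_def)
  have "opnorm_p2 \<Omega> p (\<lambda>u x. dG \<alpha> w u x - u x) \<le> ereal \<epsilon>"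
    if "0 < \<alpha>" "\<alpha> \<le> a" "\<alpha> < min \<delta> (\<delta> powr (1/p))" "memLp \<Omega> p w"
      and close: "Lpnorm \<Omega> p (\<lambda>x. w x - v x) < min \<delta> (\<delta> powr (1/p))" for \<alpha> w
  proof -
    have "(\<integral>x. norm (w x - v x) powr p \<partial>lebesgue_on \<Omega>) < \<delta>"
      using close p \<open>0 < \<delta>\<close> Lpnorm_less_imp_integral_less[of p \<Omega> "\<lambda>x. w x - v x" "\<delta> powr (1/p)"]
      by (simp add: powr_powr)
    then show ?thesis
      using that small_dev small_opnorm by (simp add: memLp_def)
  qed
  moreover have "0 < min \<delta> (\<delta> powr (1/p))"
    using \<open>0 < \<delta>\<close> by simp
  ultimately show ?thesis
    by blast
qed

theorem propositionA2:
  fixes \<Omega> :: "'n::euclidean_space set" and a p :: real and v :: "'n \<Rightarrow> complex"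
  assumes "open \<Omega>" and "bounded \<Omega>"
    and "a > 0" and "p = 2 * (a + 1)"
    and "memLp \<Omega> p v"
    and "AE x in lebesgue_on \<Omega>. v x \<noteq> 0"
  shows "\<forall>\<epsilon>>0. \<exists>\<delta>>0. \<forall>\<alpha> w. \<alpha> \<le> a \<and> memLp \<Omega> p w \<and> \<bar>\<alpha> - 0\<bar> < \<delta>
            \<and> Lpnorm \<Omega> p (\<lambda>x. w x - v x) < \<delta> \<longrightarrow>
            opnorm_p2 \<Omega> p (\<lambda>u x. dG \<alpha> w u x - dG 0 v u x) < ereal \<epsilon>"
proof (intro allI impI)
  fix \<epsilon> :: real
  assume "0 < \<epsilon>"
  have "finite_measure (lebesgue_on \<Omega>)"
    using assms(1,2) by (intro finite_measure_lebesgue_on lmeasurable_open)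
  then obtain \<delta> where "0 < \<delta>" and small: "\<forall>\<alpha> w. 0 < \<alpha> \<and> \<alpha> \<le> a \<and> \<alpha> < \<delta> \<and> memLp \<Omega> p w
      \<and> Lpnorm \<Omega> p (\<lambda>x. w x - v x) < \<delta> \<longrightarrow> opnorm_p2 \<Omega> p (\<lambda>u x. dG \<alpha> w u x - u x) \<le> ereal (\<epsilon>/2)"
    using opnorm_p2_dG_minus_id_continuous[of \<Omega> a p v "\<epsilon>/2"] assms(3-6) \<open>0 < \<epsilon>\<close> by auto
  have "opnorm_p2 \<Omega> p (\<lambda>u x. dG \<alpha> w u x - dG 0 v u x) \<le> ereal (\<epsilon>/2)"
    if "\<alpha> \<le> a" "memLp \<Omega> p w" "\<bar>\<alpha> - 0\<bar> < \<delta>" "Lpnorm \<Omega> p (\<lambda>x. w x - v x) < \<delta>" for \<alpha> w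
  proof (cases "\<alpha> \<le> 0")
    case True
    then have "opnorm_p2 \<Omega> p (\<lambda>u x. dG \<alpha> w u x - dG 0 v u x) \<le> ereal (sqrt 0)"
      by (intro opnorm_p2_le_sqrt) simp
    then show ?thesis
      using \<open>0 < \<epsilon>\<close> by (simp add: order_trans)
  qed (use that small in auto)
  moreover have "ereal (\<epsilon>/2) < ereal \<epsilon>"
    using \<open>0 < \<epsilon>\<close> by simp
  ultimately show "\<exists>\<delta>>0. \<forall>\<alpha> w. \<alpha> \<le> a \<and> memLp \<Omega> p w \<and> \<bar>\<alpha> - 0\<bar> < \<delta>
      \<and> Lpnorm \<Omega> p (\<lambda>x. w x - v x) < \<delta> \<longrightarrow> opnorm_p2 \<Omega> p (\<lambda>u x. dG \<alpha> w u x - dG 0 v u x) < ereal \<epsilon>"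
    using \<open>0 < \<delta>\<close> by (meson order_le_less_trans)
qed

end
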